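(* Let $(Y,\rho_Y)$ be a complete separable metric space, $I$ a finite set, $X=Y\times I$, $\bar X=X\times[0,\infty)$. Let $\{\pi_{ij}\}_{i,j\in I}$ be a right stochastic matrix, $\{S_i\}_{i\in I}$ jointly continuous semiflows $S_i:[0,\infty)\times Y\to Y$, $J$ a stochastic kernel on $Y$, and $\lambda>0$. Define the stochastic kernel $\bar P$ on $\bar X$ by $$\bar P((y,i,s),\bar A)=\sum_{j\in I}\pi_{ij}\int_0^\infty\lambda e^{-\lambda t}\int_Y\mathbb{1}_{\bar A}(u,j,t+s)\,J(S_i(t,y),du)\,dt.$$ Fix $y^*\in Y$ and put $V(y,i)=\rho_Y(y,y^* )$. Assume: (S1') there exist $M\geq0$, $\zeta\geq0$ with $\max_{i\in I}\rho_Y(S_i(t,y^* ),y^* )\leq Mt^\zeta$ for all $t\geq0$; (S2') there exists $L>0$ with $\rho_Y(S_i(t,y_1),S_i(t,y_2))\leq L\rho_Y(y_1,y_2)$ for all $t\geq0$, $y_1,y_2\in Y$, $i\in I$; (J1') there exist $a>0$, $b\geq0$ with $\int_Y\rho_Y^2(u,y^* )\,J(y,du)\leq a\rho_Y^2(y,y^* )+b$ for all $y\in Y$; and $2aL^2<1$. Then there exist constants $\Gamma>0$ and $C\geq0$ such that for every $t_0\geq0$ and the function $U_{t_0}:\bar X\to[0,\infty)$, $U_{t_0}(x,t)=e^{-\lambda(t_0-t)}V^2(x)\mathbb{1}_{[0,t_0]}(t)$, we have $$\sum_{n=0}^\infty\bar P^nU_{t_0}(x,0)\leq e^{-\Gamma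 t_0}V^2(x)+C\quad\text{for all }x\in X.$$
   Context: A semiflow satisfies $S_i(s,S_i(t,y))=S_i(s+t,y)$ and $S_i(0,y)=y$. $\bar P^n$ denotes the $n$-th iterate of the kernel ($\bar P^0$ the identity), acting on nonnegative Borel $f$ by $\bar P^nf(\bar x)=\int f\,d\bar P^n(\bar x,\cdot)$. *)

theory Defs
  imports "HOL-Probability.Probability"
begin

text \<open>The kernel Pbar on Xbar = (Y x I) x [0,inf), given by its action on
nonnegative functions; its n-th iterate acting on f is (Pbar ^^ n) f.\<close>

definition Pbar ::
  "('i::finite \<Rightarrow> 'i \<Rightarrow> real) \<Rightarrow> ('i \<Rightarrow> real \<Rightarrow> 'y \<Rightarrow> 'y) \<Rightarrow> ('y \<Rightarrow> 'y measure) \<Rightarrow> real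
   \<Rightarrow> ((('y \<times> 'i) \<times> real) \<Rightarrow> ennreal) \<Rightarrow> (('y \<times> 'i) \<times> real) \<Rightarrow> ennreal" where
  "Pbar \<pi> S J lam f = (\<lambda>((y, i), s).
     (\<Sum>j\<in>UNIV. ennreal (\<pi> i j) *
        (\<integral>\<^sup>+ t\<in>{0..}. ennreal (lam * exp (- lam * t)) *
            (\<integral>\<^sup>+ u. f ((u, j), t + s) \<partial>(J (S i t y))) \<partial>lborel)))"

definition semiflow :: "(real \<Rightarrow> 'y \<Rightarrow> 'y) \<Rightarrow> bool" where
  "semiflow T \<longleftrightarrow> (\<forall>y. T 0 y = y) \<and>
     (\<forall>s t y. 0 \<le> s \<longrightarrow> 0 \<le> t \<longrightarrow> T s (T t y) = T (s + t) y)"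

definition Ufun :: "real \<Rightarrow> real \<Rightarrow> 'y::metric_space \<Rightarrow> (('y \<times> 'i) \<times> real) \<Rightarrow> ennreal" where
  "Ufun lam t0 ystar = (\<lambda>((y, i), t).
      ennreal (exp (- lam * (t0 - t)) * (dist y ystar)\<^sup>2 * indicator {0..t0} t))"

end

theory Submission
  imports Defs
begin

(* With q = 2 a L^2 < 1, hypotheses (S1'), (S2') and (J1') yield the drift bound
     int rho(u, ystar)^2 J(S_i(t, y), du) <= q V(y)^2 + K exp (q lam t / 2).
   Put g = (1 - q) lam, B = 2 K / (q (1 - q)) and
     F(y, i, s) = 1{s <= t0} (exp (-g (t0 - s)) V(y)^2 + B (1 - q exp (-g (t0 - s)))).
   Integrating the drift bound against the exponential holding time gives U_t0 + Pbar F <= F,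
   and as Pbar is monotone and superadditive, sum_n Pbar^n U_t0 <= F, while
   F(x, 0) <= exp (-g t0) V(x)^2 + B. *)

lemma powr_le_const_times_exp:
  fixes p d t :: real
  assumes "0 \<le> p" "0 < d" "0 \<le> t"
  shows "t powr p \<le> exp (p * (ln (p / d) - 1)) * exp (d * t)"
proof (cases "t = 0 \<or> p = 0")
  case True
  then show ?thesis using assms by auto
next
  case False
  then have "0 < t" "0 < p" using assms by auto
  then have "p * ln t = p * ln (p / d) + p * ln (d * t / p)"
    using assms by (simp add: ln_div ln_mult algebra_simps)
  moreover have "p * ln (d * t / p) \<le> p * (d * t / p - 1)"
    using \<open>0 < t\<close> \<open>0 < p\<close> assms by (intro mult_left_mono ln_le_minus_one) auto
  ultimately have "p * ln t \<le> p * (ln (p / d) - 1) + d * t"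
    using \<open>0 < p\<close> by (simp add: algebra_simps)
  then show ?thesis
    using \<open>0 < t\<close> by (simp add: powr_def exp_add[symmetric])
qed

lemma power2_dist_le_triangle:
  fixes x x' z :: "'a::metric_space"
  assumes "dist x x' \<le> A" "dist x' z \<le> B"
  shows "(dist x z)\<^sup>2 \<le> 2 * A\<^sup>2 + 2 * B\<^sup>2"
proof -
  have "(dist x z)\<^sup>2 \<le> (A + B)\<^sup>2"
    using dist_triangle[of x z x'] assms by (intro power_mono) auto
  also have "\<dots> \<le> 2 * A\<^sup>2 + 2 * B\<^sup>2"
    using zero_le_power2[of "A - B"] by (simp add: power2_eq_square algebra_simps)
  finally show ?thesis .
qed

lemma second_moment_drift_bound:
  fixes x x' y ystar :: "'y::metric_space"
  assumes "0 \<le> t" "0 \<le> \<zeta>" "0 < d" "0 \<le> a" "0 \<le> b"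
    and Lip: "dist x x' \<le> L * dist y ystar" and orbit: "dist x' ystar \<le> M * t powr \<zeta>"
  shows "a * (dist x ystar)\<^sup>2 + b \<le> 2 * a * L\<^sup>2 * (dist y ystar)\<^sup>2
    + (2 * a * M\<^sup>2 * exp (2 * \<zeta> * (ln (2 * \<zeta> / d) - 1)) + b) * exp (d * t)"
proof -
  define C where "C = exp (2 * \<zeta> * (ln (2 * \<zeta> / d) - 1))"
  have "(M * t powr \<zeta>)\<^sup>2 = M\<^sup>2 * t powr (2 * \<zeta>)"
    by (simp add: power_mult_distrib power2_eq_square powr_add[symmetric])
  also have "\<dots> \<le> M\<^sup>2 * (C * exp (d * t))"
    unfolding C_def using assms by (intro mult_left_mono powr_le_const_times_exp) auto
  finally have "(dist x ystar)\<^sup>2 \<le> 2 * (L * dist y ystar)\<^sup>2 + 2 * (M\<^sup>2 * (C * exp (d * t)))"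
    using power2_dist_le_triangle[OF Lip orbit] by linarith
  then have "a * (dist x ystar)\<^sup>2 \<le> 2 * a * L\<^sup>2 * (dist y ystar)\<^sup>2 + 2 * a * M\<^sup>2 * C * exp (d * t)"
    using mult_left_mono[OF _ \<open>0 \<le> a\<close>] by (fastforce simp: algebra_simps power_mult_distrib)
  moreover have "b \<le> b * exp (d * t)"
    using mult_left_mono[of 1 "exp (d * t)" b] assms by simp
  ultimately show ?thesis
    unfolding C_def[symmetric] distrib_right by linarith
qed

(* The iterates of Pbar need not be measurable, so additivity of the integral is replaced by
   superadditivity, which holds for arbitrary nonnegative functions. *)
lemma nn_integral_superadditive:
  "integral\<^sup>N M f + integral\<^sup>N M g \<le> (\<integral>\<^sup>+x. f x + g x \<partial>M)"
proof -
  let ?A = "{u. simple_function M u \<and> u \<le> f}" and ?B = "{v. simple_function M v \<and> v \<le> g}"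
  have ne: "?A \<noteq> {}" "?B \<noteq> {}"
    by (auto intro!: exI[of _ "\<lambda>_. 0"] simp: le_fun_def)
  have "integral\<^sup>N M f + integral\<^sup>N M g = (SUP u\<in>?A. SUP v\<in>?B. integral\<^sup>S M u + integral\<^sup>S M v)"
    unfolding nn_integral_def
    by (subst ennreal_SUP_add_left[symmetric, OF ne(1)], subst ennreal_SUP_add_right[OF ne(2)]) (rule refl)
  also have "\<dots> \<le> (\<integral>\<^sup>+x. f x + g x \<partial>M)"
  proof (intro SUP_least)
    fix u v assume "u \<in> ?A" "v \<in> ?B"
    then have "integral\<^sup>S M u + integral\<^sup>S M v = (\<integral>\<^sup>Sx. u x + v x \<partial>M)"
      by simp
    also have "\<dots> \<le> (\<integral>\<^sup>+x. f x + g x \<partial>M)"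
      using \<open>u \<in> ?A\<close> \<open>v \<in> ?B\<close> unfolding nn_integral_def
      by (intro SUP_upper) (auto simp: le_fun_def intro: add_mono)
    finally show "integral\<^sup>S M u + integral\<^sup>S M v \<le> (\<integral>\<^sup>+x. f x + g x \<partial>M)" .
  qed
  finally show ?thesis .
qed

lemma nn_integral_affine_le:
  fixes f :: "'a \<Rightarrow> real"
  assumes "prob_space M" "f \<in> borel_measurable M" "\<And>u. 0 \<le> f u" "0 \<le> e" "0 \<le> c" "0 \<le> r"
    and "(\<integral>\<^sup>+u. ennreal (f u) \<partial>M) \<le> ennreal r"
  shows "(\<integral>\<^sup>+u. ennreal (e * f u + c) \<partial>M) \<le> ennreal (e * r + c)"
proof -
  have "(\<integral>\<^sup>+u. ennreal (e * f u + c) \<partial>M) = ennreal e * (\<integral>\<^sup>+u. ennreal (f u) \<partial>M) + ennreal c"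
    using assms by (simp add: ennreal_plus ennreal_mult nn_integral_add nn_integral_cmult
        prob_space.emeasure_space_1)
  also have "\<dots> \<le> ennreal e * ennreal r + ennreal c"
    using assms by (intro add_right_mono mult_left_mono) auto
  also have "\<dots> \<le> ennreal (e * r + c)"
    using assms by (simp flip: ennreal_plus ennreal_mult)
  finally show ?thesis .
qed

lemma suminf_funpow_le_supersolution:
  fixes P :: "('a \<Rightarrow> ennreal) \<Rightarrow> 'a \<Rightarrow> ennreal"
  assumes mono: "\<And>f g x. (\<And>z. f z \<le> g z) \<Longrightarrow> P f x \<le> P g x"
    and superadditive: "\<And>f g x. P f x + P g x \<le> P (\<lambda>z. f z + g z) x"
    and supersolution: "\<And>x. U x + P F x \<le> F x"
  shows "(\<Sum>n. (P ^^ n) U x) \<le> F x"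
proof -
  have sum_le: "(\<Sum>n<N. P (h n) x) \<le> P (\<lambda>z. \<Sum>n<N. h n z) x" for N :: nat and h x
  proof (induction N)
    case (Suc N)
    then show ?case
      using order_trans[OF add_right_mono[OF Suc.IH] superadditive] by simp
  qed simp
  have "(\<Sum>n<N. (P ^^ n) U x) \<le> F x" for N x
  proof (induction N arbitrary: x)
    case (Suc N)
    have "(\<Sum>n<Suc N. (P ^^ n) U x) = U x + (\<Sum>n<N. P ((P ^^ n) U) x)"
      by (simp add: sum.lessThan_Suc_shift del: sum.lessThan_Suc)
    also have "\<dots> \<le> U x + P F x"
      by (intro add_left_mono order_trans[OF sum_le] mono Suc.IH)
    also have "\<dots> \<le> F x" by (rule supersolution)
    finally show ?case .
  qed simp
  then show ?thesis by (intro suminf_le_const summableI)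
qed

lemma Pbar_mono:
  assumes "\<And>z. f z \<le> g z"
  shows "Pbar \<pi> S J lam f x \<le> Pbar \<pi> S J lam g x"
proof -
  obtain y i s where x: "x = ((y, i), s)" by (metis prod.collapse)
  show ?thesis unfolding x Pbar_def
    by (auto intro!: sum_mono mult_left_mono nn_integral_mono mult_right_mono assms)
qed

lemma Pbar_superadditive:
  "Pbar \<pi> S J lam f x + Pbar \<pi> S J lam g x \<le> Pbar \<pi> S J lam (\<lambda>z. f z + g z) x"
proof -
  obtain y i s where x: "x = ((y, i), s)" by (metis prod.collapse)
  let ?c = "\<lambda>t. ennreal (lam * exp (- lam * t))"
  let ?I = "\<lambda>h j t. \<integral>\<^sup>+u. h ((u, j), t + s) \<partial>J (S i t y)"
  have time_integral_superadditive:
    "(\<integral>\<^sup>+t\<in>{0..}. ?c t * ?I f j t \<partial>lborel) + (\<integral>\<^sup>+t\<in>{0..}. ?c t * ?I g j t \<partial>lborel)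
      \<le> (\<integral>\<^sup>+t\<in>{0..}. ?c t * ?I (\<lambda>z. f z + g z) j t \<partial>lborel)" for j
  proof -
    have "(\<integral>\<^sup>+t\<in>{0..}. ?c t * ?I f j t \<partial>lborel) + (\<integral>\<^sup>+t\<in>{0..}. ?c t * ?I g j t \<partial>lborel)
        \<le> (\<integral>\<^sup>+t. ?c t * ?I f j t * indicator {0..} t + ?c t * ?I g j t * indicator {0..} t \<partial>lborel)"
      by (rule nn_integral_superadditive)
    also have "\<dots> \<le> (\<integral>\<^sup>+t\<in>{0..}. ?c t * ?I (\<lambda>z. f z + g z) j t \<partial>lborel)"
    proof (rule nn_integral_mono)
      fix t
      have "?I f j t + ?I g j t \<le> ?I (\<lambda>z. f z + g z) j t"
        by (rule nn_integral_superadditive)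
      then have "?c t * (?I f j t + ?I g j t) * indicator {0..} t
          \<le> ?c t * ?I (\<lambda>z. f z + g z) j t * indicator {0..} t"
        by (intro mult_right_mono mult_left_mono) auto
      then show "?c t * ?I f j t * indicator {0..} t + ?c t * ?I g j t * indicator {0..} t
          \<le> ?c t * ?I (\<lambda>z. f z + g z) j t * indicator {0..} t"
        by (simp add: distrib_left distrib_right)
    qed
    finally show ?thesis .
  qed
  show ?thesis
    unfolding x Pbar_def prod.case sum.distrib[symmetric] distrib_left[symmetric]
    by (intro sum_mono mult_left_mono time_integral_superadditive) simp
qed

lemma Pbar_le_resolvent:
  assumes stoch: "\<And>i j. 0 \<le> \<pi> i j" "\<And>i. (\<Sum>j\<in>UNIV. \<pi> i j) = 1"
    and inner: "\<And>j t. 0 \<le> t \<Longrightarrow> (\<integral>\<^sup>+u. f ((u, j), t + s) \<partial>J (S i t y)) \<le> \<phi> t"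
  shows "Pbar \<pi> S J lam f ((y, i), s) \<le> (\<integral>\<^sup>+t\<in>{0..}. ennreal (lam * exp (- lam * t)) * \<phi> t \<partial>lborel)"
proof -
  let ?R = "\<integral>\<^sup>+t\<in>{0..}. ennreal (lam * exp (- lam * t)) * \<phi> t \<partial>lborel"
  have "Pbar \<pi> S J lam f ((y, i), s) \<le> (\<Sum>j\<in>UNIV. ennreal (\<pi> i j) * ?R)"
    unfolding Pbar_def prod.case
    by (intro sum_mono mult_left_mono nn_integral_mono)
      (auto split: split_indicator intro!: mult_left_mono inner)
  also have "\<dots> = ?R"
    using stoch by (simp add: sum_distrib_right[symmetric] sum_ennreal)
  finally show ?thesis .
qed

lemma resolvent_majorant_bound:
  fixes lam q K W tau g B :: real
  assumes lam: "0 < lam" and q: "0 < q" "q < 1" and nonneg: "0 \<le> K" "0 \<le> W" "0 \<le> tau"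
    and g: "g = (1 - q) * lam" and B: "B = 2 * K / (q * (1 - q))"
  shows "ennreal (exp (- lam * tau) * W)
      + (\<integral>\<^sup>+t\<in>{0..tau}. ennreal (lam * exp (- lam * t) *
           (exp (- g * (tau - t)) * (q * W + K * exp (q * lam / 2 * t)) + B * (1 - q * exp (- g * (tau - t)))))
         \<partial>lborel)
    \<le> ennreal (exp (- g * tau) * W + B * (1 - q * exp (- g * tau)))"
proof -
  define h where "h t = lam * exp (- lam * t) *
    (exp (- g * (tau - t)) * (q * W + K * exp (q * lam / 2 * t)) + B * (1 - q * exp (- g * (tau - t))))" for t
  define c where "c = 2 * K / q"
  define G where "G t = - (W - B) * exp (- g * tau - q * lam * t)
    - c * exp (- g * tau - q * lam / 2 * t) - B * exp (- lam * t)" for t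
  have h_eq: "h t = q * lam * (W - B) * exp (- g * tau - q * lam * t)
      + lam * K * exp (- g * tau - q * lam / 2 * t) + lam * B * exp (- lam * t)" for t
  proof -
    have e1: "exp (- lam * t) * exp (- g * (tau - t)) = exp (- g * tau - q * lam * t)"
      by (simp add: g exp_add[symmetric] algebra_simps)
    have e2: "exp (- g * tau - q * lam * t) * exp (q * lam / 2 * t) = exp (- g * tau - q * lam / 2 * t)"
      by (simp add: exp_add[symmetric])
    have "h t = q * lam * (W - B) * (exp (- lam * t) * exp (- g * (tau - t)))
        + lam * K * (exp (- lam * t) * exp (- g * (tau - t)) * exp (q * lam / 2 * t))
        + lam * B * exp (- lam * t)"
      unfolding h_def by (simp add: algebra_simps)
    then show ?thesis by (simp only: e1 e2)
  qed
  have h_nonneg: "0 \<le> h t" if "t \<in> {0..tau}" for t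
  proof -
    have "q * exp (- g * (tau - t)) \<le> 1"
      using that q lam g by (intro mult_le_one) auto
    moreover have "0 \<le> B" using B q nonneg by simp
    ultimately show ?thesis
      unfolding h_def using lam q nonneg by (intro mult_nonneg_nonneg add_nonneg_nonneg) auto
  qed
  have G_deriv: "(G has_real_derivative h t) (at t)" for t
    unfolding G_def h_eq c_def using q by (auto intro!: derivative_eq_intros simp: field_simps)
  have FTC: "(\<integral>\<^sup>+t\<in>{0..tau}. ennreal (h t) \<partial>lborel) = ennreal (G tau - G 0)"
    by (rule nn_integral_FTC_Icc) (use G_deriv h_nonneg nonneg in \<open>auto simp: h_def\<close>)
  have "G 0 \<le> G tau"
    by (rule DERIV_nonneg_imp_nondecreasing) (use G_deriv h_nonneg nonneg in auto)
  have "exp (- lam * tau) * W + (G tau - G 0) = exp (- g * tau) * W + B * (1 - q * exp (- g * tau))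
      - (1 - q) * B * exp (- g * tau - q * lam / 2 * tau)"
  proof -
    have E: "exp (- g * tau - q * lam * tau) = exp (- lam * tau)" by (simp add: g algebra_simps)
    have c_eq: "c = (1 - q) * B" using B q by (simp add: c_def)
    show ?thesis unfolding G_def E c_eq by (simp add: algebra_simps)
  qed
  moreover have "0 \<le> (1 - q) * B * exp (- g * tau - q * lam / 2 * tau)"
    using B q nonneg by simp
  ultimately have sum_le: "exp (- lam * tau) * W + (G tau - G 0) \<le> exp (- g * tau) * W + B * (1 - q * exp (- g * tau))"
    by linarith
  then show ?thesis
    unfolding h_def[symmetric] FTC using \<open>G 0 \<le> G tau\<close> nonneg
    by (simp flip: ennreal_plus add: ennreal_leI)
qed

definition potential_majorant ::
  "real \<Rightarrow> real \<Rightarrow> real \<Rightarrow> real \<Rightarrow> 'y::metric_space \<Rightarrow> (('y \<times> 'i) \<times> real) \<Rightarrow> ennreal" where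
  "potential_majorant g q B t0 ystar = (\<lambda>((y, i), s). ennreal (indicator {..t0} s *
     (exp (- g * (t0 - s)) * (dist y ystar)\<^sup>2 + B * (1 - q * exp (- g * (t0 - s))))))"

lemma potential_majorant_supersolution:
  fixes \<pi> :: "'i::finite \<Rightarrow> 'i \<Rightarrow> real"
    and S :: "'i \<Rightarrow> real \<Rightarrow> 'y::metric_space \<Rightarrow> 'y"
    and J :: "'y \<Rightarrow> 'y measure"
  assumes stoch: "\<And>i j. 0 \<le> \<pi> i j" "\<And>i. (\<Sum>j\<in>UNIV. \<pi> i j) = 1"
    and J: "\<And>y. prob_space (J y)" "\<And>y. sets (J y) = sets borel"
    and lam: "0 < lam" and q: "0 < q" "q < 1" and K: "0 \<le> K"
    and drift: "\<And>i t y. 0 \<le> t \<Longrightarrow> (\<integral>\<^sup>+u. ennreal ((dist u ystar)\<^sup>2) \<partial>J (S i t y))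
      \<le> ennreal (q * (dist y ystar)\<^sup>2 + K * exp (q * lam / 2 * t))"
    and g: "g = (1 - q) * lam" and B: "B = 2 * K / (q * (1 - q))"
  shows "Ufun lam t0 ystar z + Pbar \<pi> S J lam (potential_majorant g q B t0 ystar) z
    \<le> potential_majorant g q B t0 ystar z"
proof -
  let ?F = "potential_majorant g q B t0 ystar :: ('y \<times> 'i) \<times> real \<Rightarrow> ennreal"
  obtain y i s where z: "z = ((y, i), s)" by (metis prod.collapse)
  show ?thesis
  proof (cases "s \<le> t0")
    case False
    have "Pbar \<pi> S J lam ?F z \<le> (\<integral>\<^sup>+t\<in>{0..}. ennreal (lam * exp (- lam * t)) * 0 \<partial>lborel)"
      unfolding z using False by (intro Pbar_le_resolvent stoch) (simp add: potential_majorant_def)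
    then show ?thesis
      using False by (simp add: z Ufun_def potential_majorant_def)
  next
    case True
    define tau where "tau = t0 - s"
    define W where "W = (dist y ystar)\<^sup>2"
    define h where "h t = exp (- g * (tau - t)) * (q * W + K * exp (q * lam / 2 * t))
      + B * (1 - q * exp (- g * (tau - t)))" for t
    have B_nonneg: "0 \<le> B" using B q K by simp
    have weight_le: "q * exp (- g * (tau - t)) \<le> 1" if "t \<le> tau" for t
      using that q lam g by (intro mult_le_one) auto
    have h_nonneg: "0 \<le> h t" if "t \<le> tau" for t
      unfolding h_def W_def using weight_le[OF that] q K B_nonneg
      by (intro add_nonneg_nonneg mult_nonneg_nonneg) auto
    have inner: "(\<integral>\<^sup>+u. ?F ((u, j), t + s) \<partial>J (S i t y)) \<le> ennreal (h t) * indicator {..tau} t"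
      if "0 \<le> t" for j t
    proof (cases "t \<le> tau")
      case True
      let ?e = "exp (- g * (tau - t))"
      have "t + s \<in> {..t0}" "t0 - (t + s) = tau - t"
        using True by (auto simp: tau_def)
      then have "?F ((u, j), t + s) = ennreal (?e * (dist u ystar)\<^sup>2 + B * (1 - q * ?e))" for u
        by (simp only: potential_majorant_def prod.case indicator_simps mult_1_left)
      moreover have "(\<integral>\<^sup>+u. ennreal (?e * (dist u ystar)\<^sup>2 + B * (1 - q * ?e)) \<partial>J (S i t y))
          \<le> ennreal (?e * (q * W + K * exp (q * lam / 2 * t)) + B * (1 - q * ?e))"
      proof (rule nn_integral_affine_le)
        show "(\<lambda>u. (dist u ystar)\<^sup>2) \<in> borel_measurable (J (S i t y))"
          unfolding measurable_cong_sets[OF J(2) refl]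
          by (intro borel_measurable_continuous_onI continuous_intros)
        show "0 \<le> B * (1 - q * ?e)"
          using weight_le[OF True] B_nonneg by simp
      qed (use J that q K drift in \<open>auto simp: W_def\<close>)
      ultimately show ?thesis using True by (simp add: h_def)
    qed (simp add: potential_majorant_def tau_def)
    have "Pbar \<pi> S J lam ?F z
        \<le> (\<integral>\<^sup>+t\<in>{0..}. ennreal (lam * exp (- lam * t)) * (ennreal (h t) * indicator {..tau} t) \<partial>lborel)"
      unfolding z by (intro Pbar_le_resolvent stoch inner)
    also have "\<dots> = (\<integral>\<^sup>+t\<in>{0..tau}. ennreal (lam * exp (- lam * t) * h t) \<partial>lborel)"
      using lam h_nonneg by (intro nn_integral_cong) (auto simp: ennreal_mult split: split_indicator)
    finally have "Ufun lam t0 ystar z + Pbar \<pi> S J lam ?F z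
        \<le> ennreal (exp (- lam * tau) * W) + (\<integral>\<^sup>+t\<in>{0..tau}. ennreal (lam * exp (- lam * t) * h t) \<partial>lborel)"
      by (intro add_mono) (auto simp: z Ufun_def tau_def W_def split: split_indicator)
    also have "\<dots> \<le> ennreal (exp (- g * tau) * W + B * (1 - q * exp (- g * tau)))"
      unfolding h_def using lam q K True g B by (intro resolvent_majorant_bound) (auto simp: W_def tau_def)
    also have "\<dots> = ?F z"
      using True by (simp add: z potential_majorant_def tau_def W_def)
    finally show ?thesis .
  qed
qed

lemma Pbar_potential_le:
  fixes \<pi> :: "'i::finite \<Rightarrow> 'i \<Rightarrow> real"
    and S :: "'i \<Rightarrow> real \<Rightarrow> 'y::metric_space \<Rightarrow> 'y"
    and J :: "'y \<Rightarrow> 'y measure"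
  assumes stoch: "\<And>i j. 0 \<le> \<pi> i j" "\<And>i. (\<Sum>j\<in>UNIV. \<pi> i j) = 1"
    and J: "\<And>y. prob_space (J y)" "\<And>y. sets (J y) = sets borel"
    and lam: "0 < lam" and q: "0 < q" "q < 1" and K: "0 \<le> K"
    and drift: "\<And>i t y. 0 \<le> t \<Longrightarrow> (\<integral>\<^sup>+u. ennreal ((dist u ystar)\<^sup>2) \<partial>J (S i t y))
      \<le> ennreal (q * (dist y ystar)\<^sup>2 + K * exp (q * lam / 2 * t))"
  shows "(\<Sum>n. (Pbar \<pi> S J lam ^^ n) (Ufun lam t0 ystar) ((y, i), 0))
    \<le> ennreal (exp (- ((1 - q) * lam) * t0) * (dist y ystar)\<^sup>2 + 2 * K / (q * (1 - q)))"
proof -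
  define g where "g = (1 - q) * lam"
  define B where "B = 2 * K / (q * (1 - q))"
  have "(\<Sum>n. (Pbar \<pi> S J lam ^^ n) (Ufun lam t0 ystar) ((y, i), 0))
      \<le> potential_majorant g q B t0 ystar ((y, i), 0)"
  proof (rule suminf_funpow_le_supersolution)
    show "Pbar \<pi> S J lam f x \<le> Pbar \<pi> S J lam f' x" if "\<And>z. f z \<le> f' z" for f f' x
      using that by (rule Pbar_mono)
  qed (rule Pbar_superadditive, rule potential_majorant_supersolution[OF stoch J lam q K drift g_def B_def])
  also have "\<dots> \<le> ennreal (exp (- g * t0) * (dist y ystar)\<^sup>2 + B)"
  proof (cases "0 \<le> t0")
    case True
    have "0 \<le> B * q * exp (- g * t0)" using q K by (simp add: B_def)
    then show ?thesis using True by (simp add: potential_majorant_def ennreal_leI algebra_simps)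
  qed (simp add: potential_majorant_def)
  finally show ?thesis by (simp add: g_def B_def)
qed

theorem lemma5p1:
  fixes \<pi> :: "'i::finite \<Rightarrow> 'i \<Rightarrow> real"
    and S :: "'i \<Rightarrow> real \<Rightarrow> 'y::polish_space \<Rightarrow> 'y"
    and J :: "'y \<Rightarrow> 'y measure"
    and lam :: real and ystar :: 'y
    and M \<zeta> L a b :: real
  assumes stoch: "\<And>i j. 0 \<le> \<pi> i j" "\<And>i. (\<Sum>j\<in>UNIV. \<pi> i j) = 1"
    and semiflow: "\<And>i. semiflow (S i)"
    and cont: "\<And>i. continuous_on ({0..} \<times> UNIV) (\<lambda>p. S i (fst p) (snd p))"
    and kernel: "J \<in> borel \<rightarrow>\<^sub>M prob_algebra borel"
    and lam: "lam > 0"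
    and S1: "M \<ge> 0" "\<zeta> \<ge> 0" "\<And>t. t \<ge> 0 \<Longrightarrow> (MAX i\<in>UNIV. dist (S i t ystar) ystar) \<le> M * t powr \<zeta>"
    and S2: "L > 0" "\<And>i t y1 y2. t \<ge> 0 \<Longrightarrow> dist (S i t y1) (S i t y2) \<le> L * dist y1 y2"
    and J1: "a > 0" "b \<ge> 0"
      "\<And>y. (\<integral>\<^sup>+ u. ennreal ((dist u ystar)\<^sup>2) \<partial>(J y)) \<le> ennreal (a * (dist y ystar)\<^sup>2 + b)"
    and small: "2 * a * L\<^sup>2 < 1"
  shows "\<exists>\<Gamma> C. \<Gamma> > 0 \<and> C \<ge> 0 \<and>
    (\<forall>t0 \<ge> 0. \<forall>y i.
       (\<Sum>n. ((Pbar \<pi> S J lam) ^^ n) (Ufun lam t0 ystar) ((y, i), 0))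
         \<le> ennreal (exp (- \<Gamma> * t0) * (dist y ystar)\<^sup>2 + C))"
proof -
  (* The semiflow property, joint continuity and completeness are what make Pbar a stochastic
     kernel; the estimate itself is a pointwise comparison and does not need them. *)
  define q where "q = 2 * a * L\<^sup>2"
  define K where "K = 2 * a * M\<^sup>2 * exp (2 * \<zeta> * (ln (2 * \<zeta> / (q * lam / 2)) - 1)) + b"
  have q: "0 < q" "q < 1" using small J1 S2 by (auto simp: q_def)
  have d_pos: "0 < q * lam / 2" using q lam by simp
  have J: "prob_space (J y)" "sets (J y) = sets borel" for y
    using measurable_space[OF kernel, of y] by (auto simp: space_prob_algebra)
  have drift: "(\<integral>\<^sup>+u. ennreal ((dist u ystar)\<^sup>2) \<partial>J (S i t y))
      \<le> ennreal (q * (dist y ystar)\<^sup>2 + K * exp (q * lam / 2 * t))" if "0 \<le> t" for i t y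
  proof -
    have orbit: "dist (S i t ystar) ystar \<le> M * t powr \<zeta>"
      using order_trans[OF Max_ge S1(3)[OF that]] by simp
    have "a * (dist (S i t y) ystar)\<^sup>2 + b \<le> q * (dist y ystar)\<^sup>2 + K * exp (q * lam / 2 * t)"
      using second_moment_drift_bound[OF that S1(2) d_pos less_imp_le[OF J1(1)] J1(2) S2(2)[OF that, of i y ystar] orbit]
      by (simp add: K_def q_def)
    then show ?thesis using J1(3) order_trans ennreal_leI by blast
  qed
  have "0 \<le> K" using J1 by (simp add: K_def)
  then show ?thesis
    using Pbar_potential_le[OF stoch J lam q _ drift] q lam
    by (intro exI[of _ "(1 - q) * lam"] exI[of _ "2 * K / (q * (1 - q))"]) auto
qed

end
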